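(* Let $\mathbf x=(k,S,\Lambda,\mathbf a)$ be an abelian group $k$-parameter and $G=G_{\mathbf x}$. If $U\subseteq{}^\omega S$ and $u\subseteq{}^\omega S\setminus U$ has at most $k$ members, then $(G_{U,u}+G_u)/G_{U,u}$ is isomorphic to $G_u/G_{\emptyset,u}$.
   Context: For a set $S$, ${}^\omega S$ is the set of all functions $\omega\to S$. An abelian group $k$-parameter is $\mathbf x=(k,S,\Lambda,\mathbf a)$ with $k<\omega$, $S$ a set, $\Lambda\subseteq {}^{k+1}({}^\omega S)$ (sequences $\bar\eta=\langle\eta_0,\dots,\eta_k\rangle$, $\eta_\ell\in{}^\omega S$) and $\mathbf a:\Lambda\times\omega\to\mathbb Z$, $\mathbf a_{\bar\eta,n}=\mathbf a(\bar\eta,n)$. For $\bar\eta\in\Lambda$, $m\le k$, $n<\omega$, $\bar\eta\upharpoonleft\langle m,n\rangle$ is the sequence obtained from $\bar\eta$ by replacing $\eta_m$ with $\eta_m\restriction n$. $\Lambda_m=\{\bar\eta\upharpoonleft\langle m,n\rangle:\bar\eta\in\Lambda,n<\omega\}$, $\Lambda_{\le k}=\bigcup_{m\le k}\Lambda_m$. $G_{\mathbf x}$ is the abelian group generated by $z$, $x_{\bar\nu}$ ($\bar\nu\in\Lambda_{\le k}$), $y_{\bar\eta,n}$ ($\bar\eta\in\Lambda,n<\omega$) freely except for the relations $(n!)y_{\bar\eta,n+1}=y_{\bar\eta,n}+\mathbf a_{\bar\eta,n}z+\sum_{m\le k}x_{\bar\eta\upharpoonleft\langle m,n\rangle}$ ($\bar\eta\in\Lambda$,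 $n<\omega$). For $U\subseteq{}^\omega S$, $G_U$ is the subgroup of $G_{\mathbf x}$ generated by $\{z\}\cup\{y_{\bar\eta,n}:\bar\eta\in\Lambda\cap{}^{k+1}U,n<\omega\}\cup\{x_{\bar\eta\upharpoonleft\langle m,n\rangle}:\bar\eta\in\Lambda\cap{}^{k+1}U,m\le k,n<\omega\}$. For $U\subseteq{}^\omega S$ and finite $u\subseteq{}^\omega S$, $G_{U,u}$ is the subgroup of $G_{\mathbf x}$ generated by $\bigcup_{\eta\in u}G_{U\cup(u\setminus\{\eta\})}$ (so $G_{U,\emptyset}=\{0\}$). *)

theory Defs
  imports "HOL-Algebra.Algebra" "HOL-Algebra.Free_Abelian_Groups"
begin

text \<open>An entry of a sequence in Lambda_{<=k}: either an omega-sequence eta or a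
finite initial segment (restriction of eta to n, represented as a list of length n).\<close>
datatype 's entry = Inf "nat \<Rightarrow> 's" | Fin "'s list"

datatype 's gen = Zg | Xg "'s entry list" | Yg "(nat \<Rightarrow> 's) list" nat

definition omega_seqs :: "'s set \<Rightarrow> (nat \<Rightarrow> 's) set" where
  "omega_seqs S = {\<eta>. \<forall>n. \<eta> n \<in> S}"

text \<open>An abelian group k-parameter (k, S, Lambda, a): Lambda is a set of (k+1)-sequences
of elements of omega S (lists of length k+1); a is an arbitrary integer-valued map.\<close>
definition is_param :: "nat \<Rightarrow> 's set \<Rightarrow> (nat \<Rightarrow> 's) list set \<Rightarrow> bool" where
  "is_param k S \<Lambda> \<longleftrightarrow> (\<forall>\<eta>s\<in>\<Lambda>. length \<eta>s = Suc k \<and> set \<eta>s \<subseteq> omega_seqs S)"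

definition restr :: "(nat \<Rightarrow> 's) list \<Rightarrow> nat \<Rightarrow> nat \<Rightarrow> 's entry list" where
  "restr \<eta>s m n = map (\<lambda>i. if i = m then Fin (map (\<eta>s ! i) [0..<n]) else Inf (\<eta>s ! i))
                      [0..<length \<eta>s]"

definition Lambda_le :: "nat \<Rightarrow> (nat \<Rightarrow> 's) list set \<Rightarrow> 's entry list set" where
  "Lambda_le k \<Lambda> = {restr \<eta>s m n | \<eta>s m n. \<eta>s \<in> \<Lambda> \<and> m \<le> k}"

definition gens :: "nat \<Rightarrow> (nat \<Rightarrow> 's) list set \<Rightarrow> 's gen set" where
  "gens k \<Lambda> = {Zg} \<union> Xg ` Lambda_le k \<Lambda> \<union> {Yg \<eta>s n | \<eta>s n. \<eta>s \<in> \<Lambda>}"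

definition relator :: "nat \<Rightarrow> ((nat \<Rightarrow> 's) list \<Rightarrow> nat \<Rightarrow> int) \<Rightarrow> (nat \<Rightarrow> 's) list \<Rightarrow> nat
    \<Rightarrow> 's gen \<Rightarrow>\<^sub>0 int" where
  "relator k a \<eta>s n =
     frag_cmul (fact n) (frag_of (Yg \<eta>s (Suc n))) - frag_of (Yg \<eta>s n)
     - frag_cmul (a \<eta>s n) (frag_of Zg) - (\<Sum>m\<le>k. frag_of (Xg (restr \<eta>s m n)))"

definition free_grp :: "nat \<Rightarrow> (nat \<Rightarrow> 's) list set \<Rightarrow> ('s gen \<Rightarrow>\<^sub>0 int) monoid" where
  "free_grp k \<Lambda> = free_Abelian_group (gens k \<Lambda>)"

definition rel_subgroup :: "nat \<Rightarrow> (nat \<Rightarrow> 's) list set \<Rightarrow> ((nat \<Rightarrow> 's) list \<Rightarrow> nat \<Rightarrow> int)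
    \<Rightarrow> ('s gen \<Rightarrow>\<^sub>0 int) set" where
  "rel_subgroup k \<Lambda> a = generate (free_grp k \<Lambda>) {relator k a \<eta>s n | \<eta>s n. \<eta>s \<in> \<Lambda>}"

definition Gx :: "nat \<Rightarrow> (nat \<Rightarrow> 's) list set \<Rightarrow> ((nat \<Rightarrow> 's) list \<Rightarrow> nat \<Rightarrow> int)
    \<Rightarrow> ('s gen \<Rightarrow>\<^sub>0 int) set monoid" where
  "Gx k \<Lambda> a = free_grp k \<Lambda> Mod rel_subgroup k \<Lambda> a"

definition gcls :: "nat \<Rightarrow> (nat \<Rightarrow> 's) list set \<Rightarrow> ((nat \<Rightarrow> 's) list \<Rightarrow> nat \<Rightarrow> int)
    \<Rightarrow> 's gen \<Rightarrow> ('s gen \<Rightarrow>\<^sub>0 int) set" where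
  "gcls k \<Lambda> a g = r_coset (free_grp k \<Lambda>) (rel_subgroup k \<Lambda> a) (frag_of g)"

definition G_U :: "nat \<Rightarrow> (nat \<Rightarrow> 's) list set \<Rightarrow> ((nat \<Rightarrow> 's) list \<Rightarrow> nat \<Rightarrow> int)
    \<Rightarrow> (nat \<Rightarrow> 's) set \<Rightarrow> ('s gen \<Rightarrow>\<^sub>0 int) set set" where
  "G_U k \<Lambda> a U = generate (Gx k \<Lambda> a) (gcls k \<Lambda> a `
      ({Zg} \<union> {Yg \<eta>s n | \<eta>s n. \<eta>s \<in> \<Lambda> \<and> set \<eta>s \<subseteq> U}
            \<union> {Xg (restr \<eta>s m n) | \<eta>s m n. \<eta>s \<in> \<Lambda> \<and> set \<eta>s \<subseteq> U \<and> m \<le> k}))"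

definition G_Uu :: "nat \<Rightarrow> (nat \<Rightarrow> 's) list set \<Rightarrow> ((nat \<Rightarrow> 's) list \<Rightarrow> nat \<Rightarrow> int)
    \<Rightarrow> (nat \<Rightarrow> 's) set \<Rightarrow> (nat \<Rightarrow> 's) set \<Rightarrow> ('s gen \<Rightarrow>\<^sub>0 int) set set" where
  "G_Uu k \<Lambda> a U u = generate (Gx k \<Lambda> a) (\<Union>\<eta>\<in>u. G_U k \<Lambda> a (U \<union> (u - {\<eta>})))"

end

theory Submission
  imports Defs
begin

text \<open>
  Let \<open>H = G(U, u)\<close> and call \<open>\<eta>\<close> in \<open>\<Lambda>\<close> covering if its entries are exactly the
  points of \<open>u\<close>. As \<open>card u \<le> k < k + 1\<close>, a covering \<open>\<eta>\<close> repeats an entry at some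
  index \<open>m\<close>; once \<open>n\<close> is large enough to separate the points of \<open>u\<close>, the generator
  \<open>x(\<eta>\<restriction>\<langle>m, n\<rangle>)\<close> occurs in no relation of another sequence inside \<open>u\<close> and is not a
  generator of \<open>H\<close>. Solving the \<open>n\<close>-th relation of \<open>\<eta>\<close> for it shows that
  \<open>(H + G(u)) / H\<close> is generated by the \<open>y(\<eta>, n)\<close> with \<open>\<eta>\<close> covering and \<open>n\<close> large,
  together with the other \<open>x\<close>'s of covering sequences that are not generators of \<open>H\<close>.
  These are independent modulo \<open>H\<close>: in \<open>G \<otimes> \<rat>\<close>, with basis \<open>z\<close>, \<open>x(\<nu>)\<close>, \<open>y(\<eta>, 0)\<close>,
  the \<open>y(\<eta>, M)\<close> with \<open>M\<close> maximal is the only one of them involving the private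
  generator of level \<open>M - 1\<close> (or \<open>y(\<eta>, 0)\<close> if \<open>M\<close> is minimal), a coordinate no element
  of \<open>H\<close> involves. So the quotient is free on a set that is countably infinite or empty
  according as a covering sequence exists, and the same holds for \<open>U = {}\<close>, where
  \<open>H \<subseteq> G(u)\<close>.
\<close>

lemma (in group_hom) subgroup_preimage:
  assumes "subgroup K H"
  shows "subgroup {x \<in> carrier G. h x \<in> K} G"
proof (rule G.subgroupI)
  show "{x \<in> carrier G. h x \<in> K} \<noteq> {}"
    using subgroup.one_closed[OF assms] by force
qed (use subgroup.m_inv_closed[OF assms] subgroup.m_closed[OF assms] in auto)

lemma r_coset_subgroup_generated [simp]: "r_coset (subgroup_generated G S) = r_coset G"
  by (simp add: r_coset_def fun_eq_iff)

lemma (in normal) mem_of_rcos_eq: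
  assumes "subgroup S G" "H \<subseteq> S" "x \<in> carrier G" "s \<in> S" "H #> x = H #> s"
  shows "x \<in> S"
proof -
  have "x \<in> H #> x"
    by (rule rcos_self[OF assms(3) is_subgroup])
  then have "x \<in> H #> s"
    using assms(5) by simp
  then obtain h where h: "h \<in> H" "x = h \<otimes> s"
    unfolding r_coset_def by blast
  have "h \<in> S"
    using assms(2) h(1) by blast
  then show ?thesis
    using h(2) assms(4) by (simp add: subgroup.m_closed[OF assms(1)])
qed

lemma (in group) rcos_mult_absorb:
  assumes "subgroup H G" "z \<in> H" "y \<in> carrier G"
  shows "H #> (z \<otimes> y) = H #> y"
proof -
  have "H #> (z \<otimes> y) = (H #> z) #> y"
    using assms subgroup.subset by (intro coset_mult_assoc[symmetric]) auto
  then show ?thesis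
    using assms(2) by (simp add: subgroup.rcos_const[OF assms(1) is_group])
qed

lemma (in comm_group) generate_Un_subset_set_mult:
  assumes "subgroup H G" "subgroup K G"
  shows "generate G (H \<union> K) \<subseteq> H <#> K"
proof -
  interpret HK: second_isomorphism_grp H G K
    using assms by (simp add: second_isomorphism_grp_def second_isomorphism_grp_axioms_def
        normal_iff_subgroup)
  show ?thesis
    by (intro generate_subgroup_incl HK.normal_set_mult_subgroup Un_least
          HK.H_contained_in_set_mult HK.S_contained_in_set_mult)
qed

lemma (in comm_group) iso_quotient_by_complement:
  assumes F: "group F" and h: "h \<in> hom F G" and H: "subgroup H G"
    and ker: "\<And>x. \<lbrakk>x \<in> carrier F; h x \<in> H\<rbrakk> \<Longrightarrow> x = \<one>\<^bsub>F\<^esub>"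
  shows "F \<cong> subgroup_generated G (H \<union> h ` carrier F) Mod H"
proof -
  let ?K = "h ` carrier F"
  let ?P = "subgroup_generated G (H \<union> ?K)"
  interpret h: group_hom F G h
    using F h by (simp add: group_hom_def group_hom_axioms_def is_group)
  have carrP: "carrier ?P = generate G (H \<union> ?K)"
    using subgroup.subset[OF H] subgroup.subset[OF h.img_is_subgroup]
    by (simp add: carrier_subgroup_generated Int_absorb1)
  interpret P: comm_group ?P
    by (rule abelian_subgroup_generated) (rule comm_group_axioms)
  have "subgroup H ?P"
    using H carrP by (auto simp: subgroup_subgroup_generated_iff intro: generate.incl)
  then interpret HP: normal H ?P
    by (simp add: P.normal_iff_subgroup)
  have hP: "h \<in> hom F ?P"
    by (rule hom_into_subgroup[OF h]) blast
  define \<phi> where "\<phi> x = H #>\<^bsub>?P\<^esub> h x" for x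
  have "\<phi> \<in> hom F (?P Mod H)"
    unfolding \<phi>_def using Group.hom_compose[OF hP HP.r_coset_hom_Mod] by (simp add: comp_def)
  then interpret \<phi>: group_hom F "?P Mod H" \<phi>
    by (simp add: group_hom_def group_hom_axioms_def F HP.factorgroup_is_group)
  have "\<phi> \<in> iso F (?P Mod H)"
  proof (unfold \<phi>.iso_iff, intro conjI ballI impI subsetI)
    fix c assume "c \<in> carrier (?P Mod H)"
    then obtain y where y: "y \<in> carrier ?P" "c = H #> y"
      unfolding carrier_FactGroup by auto
    then obtain z x where zx: "z \<in> H" "x \<in> carrier F" "y = z \<otimes> h x"
      using generate_Un_subset_set_mult[OF H h.img_is_subgroup] carrP
      unfolding set_mult_def by blast
    then have "c = H #>\<^bsub>?P\<^esub> h x"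
      using y rcos_mult_absorb[OF H] by simp
    then show "c \<in> \<phi> ` carrier F"
      using zx unfolding \<phi>_def by blast
  next
    fix x assume x: "x \<in> carrier F" and "\<phi> x = \<one>\<^bsub>?P Mod H\<^esub>"
    then have "H #> h x = H"
      by (simp only: \<phi>_def one_FactGroup r_coset_subgroup_generated)
    then have "h x \<in> H"
      by (rule coset_join1[OF _ h.hom_closed[OF x] H])
    then show "x = \<one>\<^bsub>F\<^esub>"
      using ker x by blast
  qed
  then show ?thesis
    by (rule is_isoI)
qed

lemma countable_infinite_eqpoll:
  assumes "countable A" "infinite A" "countable B" "infinite B"
  shows "A \<approx> B"
proof -
  obtain f :: "_ \<Rightarrow> nat" where "bij_betw f A UNIV"
    using countableE_infinite[OF assms(1,2)] by blast
  moreover obtain g :: "_ \<Rightarrow> nat" where "bij_betw g B UNIV"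
    using countableE_infinite[OF assms(3,4)] by blast
  ultimately show ?thesis
    by (meson eqpoll_def eqpoll_sym eqpoll_trans)
qed

definition frag_eval :: "('a \<Rightarrow> 'r::comm_ring_1) \<Rightarrow> ('a \<Rightarrow>\<^sub>0 int) \<Rightarrow> 'r" where
  "frag_eval e f = (\<Sum>g\<in>Poly_Mapping.keys f. of_int (poly_mapping.lookup f g) * e g)"

lemma frag_eval_superset:
  assumes "finite A" "Poly_Mapping.keys f \<subseteq> A"
  shows "frag_eval e f = (\<Sum>g\<in>A. of_int (poly_mapping.lookup f g) * e g)"
  unfolding frag_eval_def
  by (rule sum.mono_neutral_left) (use assms in \<open>auto simp: in_keys_iff\<close>)

lemma frag_eval_add: "frag_eval e (f + g) = frag_eval e f + frag_eval e g"
proof -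
  let ?A = "Poly_Mapping.keys f \<union> Poly_Mapping.keys g"
  have "frag_eval e (f + g) = (\<Sum>x\<in>?A. of_int (poly_mapping.lookup (f + g) x) * e x)"
    using keys_add[of f g] by (intro frag_eval_superset) auto
  also have "\<dots> = (\<Sum>x\<in>?A. of_int (poly_mapping.lookup f x) * e x)
                 + (\<Sum>x\<in>?A. of_int (poly_mapping.lookup g x) * e x)"
    by (simp add: lookup_add distrib_right sum.distrib)
  also have "\<dots> = frag_eval e f + frag_eval e g"
    by (simp add: frag_eval_superset[symmetric])
  finally show ?thesis .
qed

lemma frag_eval_zero [simp]: "frag_eval e 0 = 0"
  by (simp add: frag_eval_def)

lemma frag_eval_uminus: "frag_eval e (- f) = - frag_eval e f"
proof -
  have "frag_eval e f + frag_eval e (- f) = 0"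
    using frag_eval_add[of e f "- f"] by simp
  then show ?thesis
    by (simp add: add_eq_0_iff)
qed

lemma frag_eval_diff: "frag_eval e (f - g) = frag_eval e f - frag_eval e g"
  using frag_eval_add[of e f "- g"] by (simp add: frag_eval_uminus)

lemma frag_eval_of [simp]: "frag_eval e (frag_of g) = e g"
  by (simp add: frag_eval_def)

lemma frag_eval_cmul: "frag_eval e (frag_cmul c f) = of_int c * frag_eval e f"
proof -
  have "frag_eval e (frag_cmul c f)
      = (\<Sum>g\<in>Poly_Mapping.keys f. of_int (poly_mapping.lookup (frag_cmul c f) g) * e g)"
    by (rule frag_eval_superset) (auto simp: keys_cmul)
  then show ?thesis
    by (simp add: frag_eval_def sum_distrib_left mult.assoc)
qed

lemma frag_eval_sum: "frag_eval e (\<Sum>i\<in>I. f i) = (\<Sum>i\<in>I. frag_eval e (f i))"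
  by (induction I rule: infinite_finite_induct) (auto simp: frag_eval_add)

lemma frag_eval_single_key:
  assumes "g \<in> Poly_Mapping.keys f" and "\<And>g'. \<lbrakk>g' \<in> Poly_Mapping.keys f; g' \<noteq> g\<rbrakk> \<Longrightarrow> e g' = 0"
  shows "frag_eval e f = of_int (poly_mapping.lookup f g) * e g"
proof -
  have "frag_eval e f = of_int (poly_mapping.lookup f g) * e g
      + (\<Sum>g'\<in>Poly_Mapping.keys f - {g}. of_int (poly_mapping.lookup f g') * e g')"
    unfolding frag_eval_def using assms(1) by (simp add: sum.remove)
  also have "(\<Sum>g'\<in>Poly_Mapping.keys f - {g}. of_int (poly_mapping.lookup f g') * e g') = 0"
    using assms(2) by (intro sum.neutral) auto
  finally show ?thesis by simp
qed

lemma length_restr [simp]: "length (restr \<eta>s m n) = length \<eta>s"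
  by (simp add: restr_def)

lemma nth_restr:
  "i < length \<eta>s \<Longrightarrow>
     restr \<eta>s m n ! i = (if i = m then Fin (map (\<eta>s ! i) [0..<n]) else Inf (\<eta>s ! i))"
  by (simp add: restr_def)

lemma restr_eq_restrD:
  assumes "m < length \<eta>s" and eq: "restr \<eta>s m n = restr \<eta>s' m' n'"
  shows "m' = m" "n' = n" "length \<eta>s' = length \<eta>s"
    and "\<And>i. \<lbrakk>i < length \<eta>s; i \<noteq> m\<rbrakk> \<Longrightarrow> \<eta>s' ! i = \<eta>s ! i"
    and "\<And>i. i < n \<Longrightarrow> (\<eta>s' ! m) i = (\<eta>s ! m) i"
proof -
  show len: "length \<eta>s' = length \<eta>s"
    using arg_cong[OF eq, of length] by simp
  have "restr \<eta>s m n ! m = restr \<eta>s' m' n' ! m"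
    using eq by simp
  then have mm: "m' = m" and seg: "map (\<eta>s ! m) [0..<n] = map (\<eta>s' ! m) [0..<n']"
    using assms(1) len by (auto simp: nth_restr split: if_splits)
  then show "m' = m" by simp
  show nn: "n' = n"
    using arg_cong[OF seg, of length] by simp
  show "\<eta>s' ! i = \<eta>s ! i" if "i < length \<eta>s" "i \<noteq> m" for i
    using arg_cong[OF eq, of "\<lambda>v. v ! i"] that len mm by (simp add: nth_restr)
  show "(\<eta>s' ! m) i = (\<eta>s ! m) i" if "i < n" for i
    using arg_cong[OF seg, of "\<lambda>xs. xs ! i"] that nn by simp
qed

definition sep_depth :: "(nat \<Rightarrow> 'a) set \<Rightarrow> nat" where
  "sep_depth A = (LEAST N. \<forall>p\<in>A. \<forall>q\<in>A. p \<noteq> q \<longrightarrow> (\<exists>i<N. p i \<noteq> q i))"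

lemma sep_depth_separates:
  assumes "finite A" "p \<in> A" "q \<in> A" "p \<noteq> q"
  shows "\<exists>i<sep_depth A. p i \<noteq> q i"
proof -
  define P where "P N \<longleftrightarrow> (\<forall>p\<in>A. \<forall>q\<in>A. p \<noteq> q \<longrightarrow> (\<exists>i<N. p i \<noteq> q i))" for N
  let ?D = "(\<lambda>(p, q). LEAST i. p i \<noteq> q i) ` (A \<times> A)"
  obtain N where N: "\<And>d. d \<in> ?D \<Longrightarrow> d < N"
    using finite_nat_set_iff_bounded[of ?D] assms(1) by blast
  have "\<exists>i<N. p i \<noteq> q i" if "p \<in> A" "q \<in> A" "p \<noteq> q" for p q
  proof -
    obtain i where "p i \<noteq> q i"
      using \<open>p \<noteq> q\<close> by (auto simp: fun_eq_iff)
    then have "p (LEAST i. p i \<noteq> q i) \<noteq> q (LEAST i. p i \<noteq> q i)"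
      by (rule LeastI)
    moreover have "(LEAST i. p i \<noteq> q i) \<in> ?D"
      using that by (intro image_eqI[of _ _ "(p, q)"]) auto
    ultimately show ?thesis
      using N by blast
  qed
  then have "P N"
    unfolding P_def by blast
  then have "P (sep_depth A)"
    unfolding sep_depth_def P_def[symmetric] by (rule LeastI)
  then show ?thesis
    using assms unfolding P_def by blast
qed

section \<open>Rational coordinates\<close>

text \<open>Over \<open>\<rat>\<close> each relation expresses \<open>y(\<eta>, n + 1)\<close> through \<open>y(\<eta>, n)\<close>, \<open>z\<close> and the
  \<open>x\<close>'s, so \<open>z\<close>, the \<open>x(\<nu>)\<close> and the \<open>y(\<eta>, 0)\<close> form a basis of \<open>G \<otimes> \<rat>\<close>, and
  \<open>y_coords k a \<eta> n\<close> are the coordinates of \<open>y(\<eta>, n)\<close> in this basis.\<close>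

fun y_coords :: "nat \<Rightarrow> ((nat \<Rightarrow> 's) list \<Rightarrow> nat \<Rightarrow> int) \<Rightarrow> (nat \<Rightarrow> 's) list \<Rightarrow> nat
    \<Rightarrow> 's gen \<Rightarrow> rat" where
  "y_coords k a \<eta>s 0 c = of_bool (c = Yg \<eta>s 0)"
| "y_coords k a \<eta>s (Suc n) c = (y_coords k a \<eta>s n c + of_int (a \<eta>s n) * of_bool (c = Zg)
        + (\<Sum>m\<le>k. of_bool (c = Xg (restr \<eta>s m n)))) / fact n"

definition gen_coords :: "nat \<Rightarrow> ((nat \<Rightarrow> 's) list \<Rightarrow> nat \<Rightarrow> int) \<Rightarrow> 's gen \<Rightarrow> 's gen \<Rightarrow> rat" where
  "gen_coords k a g = (case g of Yg \<eta>s n \<Rightarrow> y_coords k a \<eta>s n | _ \<Rightarrow> (\<lambda>c. of_bool (c = g)))"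

definition frag_coords :: "nat \<Rightarrow> ((nat \<Rightarrow> 's) list \<Rightarrow> nat \<Rightarrow> int) \<Rightarrow> ('s gen \<Rightarrow>\<^sub>0 int)
    \<Rightarrow> 's gen \<Rightarrow> rat" where
  "frag_coords k a f c = frag_eval (\<lambda>g. gen_coords k a g c) f"

lemma gen_coords_simps [simp]:
  "gen_coords k a Zg = (\<lambda>c. of_bool (c = Zg))"
  "gen_coords k a (Xg v) = (\<lambda>c. of_bool (c = Xg v))"
  "gen_coords k a (Yg \<eta>s n) = y_coords k a \<eta>s n"
  by (simp_all add: gen_coords_def)

lemma frag_coords_relator [simp]: "frag_coords k a (relator k a \<eta>s n) c = 0"
  by (simp add: frag_coords_def relator_def frag_eval_diff frag_eval_cmul frag_eval_sum)

lemma y_coords_nonzero: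
  assumes "y_coords k a \<eta>s n c \<noteq> 0"
  shows "c = Zg \<or> c = Yg \<eta>s 0 \<or> (\<exists>m\<le>k. \<exists>j<n. c = Xg (restr \<eta>s m j))"
  using assms
proof (induction n)
  case (Suc n)
  show ?case
  proof (rule ccontr)
    assume "\<not> ?case"
    then have "y_coords k a \<eta>s n c = 0"
      using Suc.IH less_SucI by blast
    moreover have "(\<Sum>m\<le>k. of_bool (c = Xg (restr \<eta>s m n)) :: rat) = 0"
      using \<open>\<not> ?case\<close> by (auto intro: sum.neutral)
    ultimately show False
      using \<open>\<not> ?case\<close> Suc.prems by simp
  qed
qed simp

lemma y_coords_Xg_nonneg: "y_coords k a \<eta>s n (Xg v) \<ge> 0"
  by (induction n) (simp_all add: sum_nonneg)

lemma y_coords_Yg_pos: "y_coords k a \<eta>s n (Yg \<eta>s 0) > 0"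
  by (induction n) simp_all

lemma y_coords_Xg_pos:
  assumes "j < n" "m \<le> k"
  shows "y_coords k a \<eta>s n (Xg (restr \<eta>s m j)) > 0"
  using assms(1)
proof (induction n)
  case (Suc n)
  let ?X = "Xg (restr \<eta>s m j)"
  have "(\<Sum>m'\<le>k. of_bool (?X = Xg (restr \<eta>s m' n)) :: rat) \<ge> of_bool (?X = Xg (restr \<eta>s m n))"
    using assms(2) by (intro member_le_sum) auto
  moreover have "(\<Sum>m'\<le>k. of_bool (?X = Xg (restr \<eta>s m' n)) :: rat) \<ge> 0"
    by (intro sum_nonneg) simp
  moreover have "y_coords k a \<eta>s n ?X > 0 \<or> j = n"
    using Suc by (auto simp: less_Suc_eq)
  ultimately have "y_coords k a \<eta>s n ?X + (\<Sum>m'\<le>k. of_bool (?X = Xg (restr \<eta>s m' n))) > 0"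
    using y_coords_Xg_nonneg[of k a \<eta>s n "restr \<eta>s m j"] by fastforce
  then show ?case by simp
qed simp

lemma relator_solve_Yg:
  "frag_of (Yg \<eta>s n) = frag_cmul (fact n) (frag_of (Yg \<eta>s (Suc n)))
     - frag_cmul (a \<eta>s n) (frag_of Zg) - (\<Sum>m\<le>k. frag_of (Xg (restr \<eta>s m n)))
     - relator k a \<eta>s n"
  by (simp add: relator_def algebra_simps)

lemma relator_solve_Xg:
  assumes "i \<le> k"
  shows "frag_of (Xg (restr \<eta>s i n)) = frag_cmul (fact n) (frag_of (Yg \<eta>s (Suc n)))
     - frag_of (Yg \<eta>s n) - frag_cmul (a \<eta>s n) (frag_of Zg)
     - (\<Sum>m\<in>{..k} - {i}. frag_of (Xg (restr \<eta>s m n))) - relator k a \<eta>s n"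
proof -
  have "(\<Sum>m\<le>k. frag_of (Xg (restr \<eta>s m n)))
      = frag_of (Xg (restr \<eta>s i n)) + (\<Sum>m\<in>{..k} - {i}. frag_of (Xg (restr \<eta>s m n)))"
    using assms by (subst sum.remove[of _ i]) auto
  then show ?thesis
    by (simp add: relator_def algebra_simps)
qed

locale presentation =
  fixes k :: nat and \<Lambda> :: "(nat \<Rightarrow> 's) list set" and a :: "(nat \<Rightarrow> 's) list \<Rightarrow> nat \<Rightarrow> int"
begin

abbreviation "\<F> \<equiv> free_grp k \<Lambda>"
abbreviation "\<R> \<equiv> rel_subgroup k \<Lambda> a"
abbreviation "\<G> \<equiv> Gx k \<Lambda> a"

abbreviation cls :: "('s gen \<Rightarrow>\<^sub>0 int) \<Rightarrow> ('s gen \<Rightarrow>\<^sub>0 int) set" where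
  "cls f \<equiv> \<R> #>\<^bsub>\<F>\<^esub> f"

lemma gens_intros [simp]:
  "Zg \<in> gens k \<Lambda>"
  "\<eta>s \<in> \<Lambda> \<Longrightarrow> Yg \<eta>s n \<in> gens k \<Lambda>"
  "\<lbrakk>\<eta>s \<in> \<Lambda>; m \<le> k\<rbrakk> \<Longrightarrow> Xg (restr \<eta>s m n) \<in> gens k \<Lambda>"
  by (auto simp: gens_def Lambda_le_def)

lemma carrier_free_grp [simp]: "f \<in> carrier \<F> \<longleftrightarrow> Poly_Mapping.keys f \<subseteq> gens k \<Lambda>"
  by (simp add: free_grp_def)

lemma free_grp_simps [simp]:
  "f \<otimes>\<^bsub>\<F>\<^esub> g = f + g"
  "\<one>\<^bsub>\<F>\<^esub> = 0"
  "Poly_Mapping.keys f \<subseteq> gens k \<Lambda> \<Longrightarrow> inv\<^bsub>\<F>\<^esub> f = - f"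
  by (simp_all add: free_grp_def)

lemma comm_group_free_grp: "comm_group \<F>"
  by (simp add: free_grp_def abelian_free_Abelian_group)

lemma group_free_grp: "group \<F>"
  by (simp add: free_grp_def)

lemma relator_in_carrier: "\<eta>s \<in> \<Lambda> \<Longrightarrow> relator k a \<eta>s n \<in> carrier \<F>"
  unfolding relator_def carrier_free_grp
  by (intro order.trans[OF keys_diff] Un_least order.trans[OF keys_cmul]
        order.trans[OF keys_sum] UN_least) auto

lemma relator_in_rel_subgroup: "\<eta>s \<in> \<Lambda> \<Longrightarrow> relator k a \<eta>s n \<in> \<R>"
  unfolding rel_subgroup_def by (rule generate.incl) blast

lemma subgroup_rel_subgroup: "subgroup \<R> \<F>"
  unfolding rel_subgroup_def
  by (rule group.generate_is_subgroup[OF group_free_grp])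
     (use relator_in_carrier in \<open>auto simp del: carrier_free_grp\<close>)

lemma normal_rel_subgroup: "\<R> \<lhd> \<F>"
  using comm_group.normal_iff_subgroup[OF comm_group_free_grp] subgroup_rel_subgroup by blast

lemma group_Gx: "group \<G>"
  unfolding Gx_def by (rule normal.factorgroup_is_group[OF normal_rel_subgroup])

lemma comm_group_Gx: "comm_group \<G>"
  unfolding Gx_def by (rule comm_group.abelian_FactGroup[OF comm_group_free_grp subgroup_rel_subgroup])

lemma group_hom_cls: "group_hom \<F> \<G> cls"
  unfolding group_hom_def group_hom_axioms_def Gx_def
  using group_free_grp normal.r_coset_hom_Mod[OF normal_rel_subgroup]
    normal.factorgroup_is_group[OF normal_rel_subgroup] by blast

lemma carrier_Gx: "carrier \<G> = cls ` carrier \<F>"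
  by (simp add: Gx_def carrier_FactGroup)

lemma cls_add:
  "\<lbrakk>f \<in> carrier \<F>; g \<in> carrier \<F>\<rbrakk> \<Longrightarrow> cls (f + g) = cls f \<otimes>\<^bsub>\<G>\<^esub> cls g"
  using group_hom.hom_mult[OF group_hom_cls] by fastforce

lemma cls_diff:
  assumes "f \<in> carrier \<F>" "g \<in> carrier \<F>"
  shows "cls (f - g) = cls f \<otimes>\<^bsub>\<G>\<^esub> inv\<^bsub>\<G>\<^esub> cls g"
proof -
  have "- g = inv\<^bsub>\<F>\<^esub> g" "inv\<^bsub>\<F>\<^esub> g \<in> carrier \<F>"
    using assms(2) group.inv_closed[OF group_free_grp] by auto
  then show ?thesis
    using assms(1) cls_add group_hom.hom_inv[OF group_hom_cls assms(2)]
    by (simp only: diff_conv_add_uminus)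
qed

lemma cls_relator [simp]: "\<eta>s \<in> \<Lambda> \<Longrightarrow> cls (relator k a \<eta>s n) = \<one>\<^bsub>\<G>\<^esub>"
  using subgroup.rcos_const[OF subgroup_rel_subgroup group_free_grp relator_in_rel_subgroup]
  by (simp add: Gx_def)

definition gens_on :: "(nat \<Rightarrow> 's) set \<Rightarrow> 's gen set" where
  "gens_on V = {Zg} \<union> {Yg \<eta>s n | \<eta>s n. \<eta>s \<in> \<Lambda> \<and> set \<eta>s \<subseteq> V}
                   \<union> {Xg (restr \<eta>s m n) | \<eta>s m n. \<eta>s \<in> \<Lambda> \<and> set \<eta>s \<subseteq> V \<and> m \<le> k}"

lemma gens_on_subset: "gens_on V \<subseteq> gens k \<Lambda>"
  by (auto simp: gens_on_def)

lemma G_U_eq: "G_U k \<Lambda> a V = generate \<G> ((\<lambda>g. cls (frag_of g)) ` gens_on V)"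
  by (simp add: G_U_def gens_on_def gcls_def image_image)

lemma cls_in_carrier: "f \<in> carrier \<F> \<Longrightarrow> cls f \<in> carrier \<G>"
  unfolding carrier_Gx by (rule imageI)

lemma cls_frag_of_gens_on: "(\<lambda>g. cls (frag_of g)) ` gens_on V \<subseteq> carrier \<G>"
proof (rule image_subsetI)
  fix g assume "g \<in> gens_on V"
  then show "cls (frag_of g) \<in> carrier \<G>"
    using gens_on_subset by (intro cls_in_carrier) auto
qed

lemma subgroup_G_U: "subgroup (G_U k \<Lambda> a V) \<G>"
  unfolding G_U_eq by (rule group.generate_is_subgroup[OF group_Gx cls_frag_of_gens_on])

lemma G_U_mono: "V \<subseteq> W \<Longrightarrow> G_U k \<Lambda> a V \<subseteq> G_U k \<Lambda> a W"
  unfolding G_U_eq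
  by (intro group.mono_generate[OF group_Gx] image_mono) (unfold gens_on_def, blast)

lemma subgroup_G_Uu: "subgroup (G_Uu k \<Lambda> a U u) \<G>"
  unfolding G_Uu_def
  by (rule group.generate_is_subgroup[OF group_Gx]) (use subgroup.subset[OF subgroup_G_U] in blast)

lemma G_U_subset_G_Uu: "e \<in> u \<Longrightarrow> G_U k \<Lambda> a (U \<union> (u - {e})) \<subseteq> G_Uu k \<Lambda> a U u"
  unfolding G_Uu_def by (auto intro: generate.incl)

lemma G_Uu_empty: "G_Uu k \<Lambda> a U {} = {\<one>\<^bsub>\<G>\<^esub>}"
  by (simp add: G_Uu_def group.generate_empty[OF group_Gx])

lemma G_Uu_empty_subset_G_U: "G_Uu k \<Lambda> a {} u \<subseteq> G_U k \<Lambda> a u"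
  unfolding G_Uu_def
  by (rule group.generate_subgroup_incl[OF group_Gx _ subgroup_G_U]) (use G_U_mono in blast)

end

section \<open>Sequences supported on a small set\<close>

locale small_support = presentation k \<Lambda> a
  for k :: nat and \<Lambda> :: "(nat \<Rightarrow> 's) list set" and a :: "(nat \<Rightarrow> 's) list \<Rightarrow> nat \<Rightarrow> int" +
  fixes u :: "(nat \<Rightarrow> 's) set"
  assumes length_Lambda: "\<And>\<eta>s. \<eta>s \<in> \<Lambda> \<Longrightarrow> length \<eta>s = Suc k"
    and finite_u: "finite u" and card_u: "card u \<le> k"
begin

lemma deep_restr_inj:
  assumes "\<eta>s \<in> \<Lambda>" "\<eta>s' \<in> \<Lambda>" "set \<eta>s \<subseteq> u" "set \<eta>s' \<subseteq> u" "m \<le> k"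
    and "sep_depth u \<le> j" and eq: "restr \<eta>s m j = restr \<eta>s' m' j'"
  shows "\<eta>s' = \<eta>s \<and> m' = m \<and> j' = j"
proof -
  have len: "length \<eta>s = Suc k" "length \<eta>s' = Suc k"
    using assms(1,2) length_Lambda by auto
  note D = restr_eq_restrD[OF _ eq, unfolded len]
  have "\<eta>s' ! m = \<eta>s ! m"
  proof (rule ccontr)
    assume "\<eta>s' ! m \<noteq> \<eta>s ! m"
    moreover have "\<eta>s ! m \<in> u" "\<eta>s' ! m \<in> u"
      using assms(3-5) len nth_mem[of m \<eta>s] nth_mem[of m \<eta>s'] by auto
    ultimately obtain i where "i < sep_depth u" "(\<eta>s' ! m) i \<noteq> (\<eta>s ! m) i"
      using sep_depth_separates[OF finite_u] by metis
    then show False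
      using D(5) assms(5,6) by simp
  qed
  then have "\<eta>s' ! i = \<eta>s ! i" if "i < Suc k" for i
    using D(4)[of i] assms(5) that by (cases "i = m") auto
  then have "\<eta>s' = \<eta>s"
    using len by (intro nth_equalityI) auto
  then show ?thesis
    using D(1,2) assms(5) by simp
qed

definition covering :: "(nat \<Rightarrow> 's) list \<Rightarrow> bool" where
  "covering \<eta>s \<longleftrightarrow> \<eta>s \<in> \<Lambda> \<and> set \<eta>s = u"

definition rep_index :: "(nat \<Rightarrow> 's) list \<Rightarrow> nat" where
  "rep_index \<eta>s = (SOME i. i \<le> k \<and> (\<exists>j\<le>k. j \<noteq> i \<and> \<eta>s ! j = \<eta>s ! i))"

lemma length_covering: "covering \<eta>s \<Longrightarrow> length \<eta>s = Suc k"
  by (simp add: covering_def length_Lambda)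

lemma rep_index_repeats:
  assumes "covering \<eta>s"
  shows "rep_index \<eta>s \<le> k" "\<exists>j\<le>k. j \<noteq> rep_index \<eta>s \<and> \<eta>s ! j = \<eta>s ! rep_index \<eta>s"
proof -
  have len: "length \<eta>s = Suc k"
    using assms by (rule length_covering)
  have "\<not> distinct \<eta>s"
  proof
    assume "distinct \<eta>s"
    then have "card u = Suc k"
      using assms len distinct_card by (fastforce simp: covering_def)
    then show False
      using card_u by simp
  qed
  then obtain i j where "i \<le> k" "j \<le> k" "j \<noteq> i" "\<eta>s ! j = \<eta>s ! i"
    using len by (auto simp: distinct_conv_nth less_Suc_eq_le)
  then have "\<exists>i. i \<le> k \<and> (\<exists>j\<le>k. j \<noteq> i \<and> \<eta>s ! j = \<eta>s ! i)"
    by blast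
  from someI_ex[OF this]
  show "rep_index \<eta>s \<le> k" "\<exists>j\<le>k. j \<noteq> rep_index \<eta>s \<and> \<eta>s ! j = \<eta>s ! rep_index \<eta>s"
    unfolding rep_index_def by blast+
qed

lemma covering_nth_off_rep_index:
  assumes "covering \<eta>s" "p \<in> u"
  shows "\<exists>i\<le>k. i \<noteq> rep_index \<eta>s \<and> \<eta>s ! i = p"
proof -
  obtain i where i: "i \<le> k" "\<eta>s ! i = p"
    using assms length_covering[OF assms(1)]
    by (auto simp: covering_def in_set_conv_nth less_Suc_eq_le)
  then show ?thesis
    using rep_index_repeats(2)[OF assms(1)] by (cases "i = rep_index \<eta>s") auto
qed

definition Uu_seq :: "(nat \<Rightarrow> 's) set \<Rightarrow> (nat \<Rightarrow> 's) list \<Rightarrow> bool" where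
  "Uu_seq U \<eta>s \<longleftrightarrow> \<eta>s \<in> \<Lambda> \<and> (\<exists>e\<in>u. set \<eta>s \<subseteq> U \<union> (u - {e}))"

definition Uu_support :: "(nat \<Rightarrow> 's) set \<Rightarrow> 's gen set" where
  "Uu_support U = {Zg} \<union> {Xg (restr \<eta>s m j) | \<eta>s m j. Uu_seq U \<eta>s \<and> m \<le> k}
                        \<union> {Yg \<eta>s 0 | \<eta>s. Uu_seq U \<eta>s}"

text \<open>A covering sequence has \<open>k + 1 > card u\<close> entries, so its entry at \<^term>\<open>rep_index\<close>
  recurs at another index. Hence a deep restriction at \<^term>\<open>rep_index\<close> belongs to no other
  sequence inside \<open>u\<close> and to no sequence missing a point of \<open>u\<close>.\<close>

definition private_slot :: "'s entry list \<Rightarrow> bool" where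
  "private_slot v \<longleftrightarrow>
     (\<exists>\<eta>s j. covering \<eta>s \<and> sep_depth u \<le> j \<and> v = restr \<eta>s (rep_index \<eta>s) j)"

definition basis :: "(nat \<Rightarrow> 's) set \<Rightarrow> 's gen set" where
  "basis U = {Xg (restr \<eta>s m j) | \<eta>s m j. covering \<eta>s \<and> m \<le> k \<and> \<not> private_slot (restr \<eta>s m j)
                                          \<and> Xg (restr \<eta>s m j) \<notin> Uu_support U}
             \<union> {Yg \<eta>s n | \<eta>s n. covering \<eta>s \<and> sep_depth u \<le> n}"

lemma Zg_notin_basis [simp]: "Zg \<notin> basis U"
  by (auto simp: basis_def)

lemma Xg_in_basisD: "Xg v \<in> basis U \<Longrightarrow> \<not> private_slot v \<and> Xg v \<notin> Uu_support U"
  by (auto simp: basis_def)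

lemma Yg_in_basisD: "Yg \<eta>s n \<in> basis U \<Longrightarrow> covering \<eta>s \<and> sep_depth u \<le> n"
  by (auto simp: basis_def)

lemma private_slot_notin_Uu_support:
  assumes "U \<inter> u = {}" "covering \<eta>s"
  shows "Xg (restr \<eta>s (rep_index \<eta>s) j) \<notin> Uu_support U"
proof
  assume "Xg (restr \<eta>s (rep_index \<eta>s) j) \<in> Uu_support U"
  then obtain \<eta>s' m j' where W: "Uu_seq U \<eta>s'" "restr \<eta>s (rep_index \<eta>s) j = restr \<eta>s' m j'"
    by (auto simp: Uu_support_def)
  obtain e where e: "e \<in> u" "set \<eta>s' \<subseteq> U \<union> (u - {e})"
    using W(1) by (auto simp: Uu_seq_def)
  obtain i where i: "i \<le> k" "i \<noteq> rep_index \<eta>s" "\<eta>s ! i = e"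
    using covering_nth_off_rep_index[OF assms(2) e(1)] by blast
  have len: "length \<eta>s = Suc k"
    using assms(2) by (rule length_covering)
  have "\<eta>s' ! i = e"
    using restr_eq_restrD(3,4)[OF _ W(2)] rep_index_repeats(1)[OF assms(2)] i len by simp
  moreover have "\<eta>s' ! i \<in> set \<eta>s'"
    using restr_eq_restrD(3)[OF _ W(2)] rep_index_repeats(1)[OF assms(2)] i len by simp
  ultimately show False
    using e assms(1) by blast
qed

lemma Yg_covering_notin_Uu_support:
  assumes "U \<inter> u = {}" "covering \<eta>s"
  shows "Yg \<eta>s 0 \<notin> Uu_support U"
  using assms by (auto simp: Uu_support_def Uu_seq_def covering_def)

text \<open>Of the basis elements, only the \<open>y(\<eta>, n)\<close> with \<open>n \<ge> M\<close> involve the coordinate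
  \<^term>\<open>top_coord \<eta>s M\<close>; so it detects \<open>y(\<eta>, M)\<close> for \<open>M\<close> maximal.\<close>

definition top_coord :: "(nat \<Rightarrow> 's) list \<Rightarrow> nat \<Rightarrow> 's gen" where
  "top_coord \<eta>s M =
     (if M = sep_depth u then Yg \<eta>s 0 else Xg (restr \<eta>s (rep_index \<eta>s) (M - 1)))"

lemma top_coord_notin_Uu_support:
  "\<lbrakk>U \<inter> u = {}; covering \<eta>s\<rbrakk> \<Longrightarrow> top_coord \<eta>s M \<notin> Uu_support U"
  using private_slot_notin_Uu_support Yg_covering_notin_Uu_support by (simp add: top_coord_def)

lemma top_coord_neq_basis_Xg:
  assumes "Xg v \<in> basis U" "covering \<eta>s" "sep_depth u \<le> M"
  shows "top_coord \<eta>s M \<noteq> Xg v"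
proof
  assume "top_coord \<eta>s M = Xg v"
  then have "M \<noteq> sep_depth u" "v = restr \<eta>s (rep_index \<eta>s) (M - 1)"
    by (auto simp: top_coord_def split: if_splits)
  then have "private_slot v"
    using assms(2,3) unfolding private_slot_def by (intro exI[of _ \<eta>s] exI[of _ "M - 1"]) auto
  then show False
    using Xg_in_basisD[OF assms(1)] by blast
qed

lemma y_coords_top_coord:
  assumes "covering \<eta>s" "sep_depth u \<le> M"
  shows "y_coords k a \<eta>s M (top_coord \<eta>s M) \<noteq> 0"
proof (cases "M = sep_depth u")
  case False
  then have "M - 1 < M"
    using assms(2) by simp
  have "y_coords k a \<eta>s M (Xg (restr \<eta>s (rep_index \<eta>s) (M - 1))) > 0"
    by (rule y_coords_Xg_pos[OF \<open>M - 1 < M\<close> rep_index_repeats(1)[OF assms(1)]])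
  with False show ?thesis
    by (simp add: top_coord_def)
qed (simp add: top_coord_def y_coords_Yg_pos[THEN less_imp_neq, symmetric])

lemma y_coords_top_coord_nonzeroD:
  assumes "covering \<eta>s" "sep_depth u \<le> M" "covering \<eta>s'" "sep_depth u \<le> n"
    and "y_coords k a \<eta>s' n (top_coord \<eta>s M) \<noteq> 0"
  shows "\<eta>s' = \<eta>s \<and> M \<le> n"
proof (cases "M = sep_depth u")
  case True
  then show ?thesis
    using y_coords_nonzero[OF assms(5)] assms(4) by (auto simp: top_coord_def)
next
  case False
  then obtain m j where "m \<le> k" "j < n" "restr \<eta>s (rep_index \<eta>s) (M - 1) = restr \<eta>s' m j"
    using y_coords_nonzero[OF assms(5)] by (auto simp: top_coord_def)
  moreover have "\<eta>s \<in> \<Lambda>" "set \<eta>s \<subseteq> u" "\<eta>s' \<in> \<Lambda>" "set \<eta>s' \<subseteq> u"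
    using assms(1,3) by (auto simp: covering_def)
  ultimately show ?thesis
    using deep_restr_inj[of \<eta>s \<eta>s' "rep_index \<eta>s" "M - 1" m j] rep_index_repeats(1)[OF assms(1)]
      assms(2) False by auto
qed

lemma frag_coords_top_coord:
  assumes keys: "Poly_Mapping.keys f \<subseteq> basis U" and M_key: "Yg \<eta>s M \<in> Poly_Mapping.keys f"
    and M_max: "\<And>n. Yg \<eta>s n \<in> Poly_Mapping.keys f \<Longrightarrow> n \<le> M"
  shows "frag_coords k a f (top_coord \<eta>s M)
           = of_int (poly_mapping.lookup f (Yg \<eta>s M)) * y_coords k a \<eta>s M (top_coord \<eta>s M)"
  unfolding frag_coords_def
proof (subst frag_eval_single_key[OF M_key])
  have cov: "covering \<eta>s" and M: "sep_depth u \<le> M"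
    using Yg_in_basisD keys M_key by blast+
  fix g assume g: "g \<in> Poly_Mapping.keys f" "g \<noteq> Yg \<eta>s M"
  show "gen_coords k a g (top_coord \<eta>s M) = 0"
  proof (cases g)
    case (Xg v)
    then show ?thesis
      using top_coord_neq_basis_Xg[OF _ cov M] g keys by auto
  next
    case (Yg \<eta>s' n)
    have "\<eta>s' = \<eta>s \<and> M \<le> n" if "y_coords k a \<eta>s' n (top_coord \<eta>s M) \<noteq> 0"
      using y_coords_top_coord_nonzeroD[OF cov M _ _ that] Yg_in_basisD g Yg keys by blast
    then show ?thesis
      using M_max g Yg by fastforce
  qed (use g keys in auto)
qed simp

lemma frag_coords_basis_Xg:
  assumes keys: "Poly_Mapping.keys f \<subseteq> basis U" and g: "Xg v \<in> Poly_Mapping.keys f"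
    and no_Yg: "\<And>\<eta>s n. Yg \<eta>s n \<notin> Poly_Mapping.keys f"
  shows "frag_coords k a f (Xg v) = of_int (poly_mapping.lookup f (Xg v))"
  unfolding frag_coords_def
proof (subst frag_eval_single_key[OF g])
  fix g' assume "g' \<in> Poly_Mapping.keys f" "g' \<noteq> Xg v"
  then show "gen_coords k a g' (Xg v) = 0"
    using no_Yg keys by (cases g') auto
qed simp

lemma basis_independent:
  assumes disj: "U \<inter> u = {}" and keys: "Poly_Mapping.keys f \<subseteq> basis U"
    and vanish: "\<And>c. c \<notin> Uu_support U \<Longrightarrow> frag_coords k a f c = 0"
  shows "f = 0"
proof (rule ccontr)
  assume "f \<noteq> 0"
  have lookup_nonzero: "poly_mapping.lookup f g \<noteq> 0" if "g \<in> Poly_Mapping.keys f" for g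
    using that by (simp add: in_keys_iff)
  show False
  proof (cases "\<exists>\<eta>s n. Yg \<eta>s n \<in> Poly_Mapping.keys f")
    case True
    then obtain \<eta>s n0 where n0: "Yg \<eta>s n0 \<in> Poly_Mapping.keys f"
      by blast
    let ?N = "{n. Yg \<eta>s n \<in> Poly_Mapping.keys f}"
    have fin: "finite ?N"
      by (rule finite_vimageI[of _ "Yg \<eta>s", unfolded vimage_def]) (auto simp: inj_def)
    have M_key: "Yg \<eta>s (Max ?N) \<in> Poly_Mapping.keys f"
      using fin n0 Max_in[of ?N] by blast
    have cov: "covering \<eta>s" and M: "sep_depth u \<le> Max ?N"
      using Yg_in_basisD keys M_key by blast+
    have "frag_coords k a f (top_coord \<eta>s (Max ?N)) \<noteq> 0"
      using frag_coords_top_coord[OF keys M_key] fin lookup_nonzero[OF M_key]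
        y_coords_top_coord[OF cov M] by simp
    then show False
      using vanish top_coord_notin_Uu_support[OF disj cov] by blast
  next
    case False
    obtain g where g: "g \<in> Poly_Mapping.keys f"
      using \<open>f \<noteq> 0\<close> by fastforce
    then obtain v where v: "g = Xg v"
      using False keys by (cases g) auto
    have "Xg v \<notin> Uu_support U"
      using Xg_in_basisD keys g v by blast
    moreover have "frag_coords k a f (Xg v) \<noteq> 0"
      using frag_coords_basis_Xg[OF keys] False g v lookup_nonzero[OF g] by auto
    ultimately show False
      using vanish by blast
  qed
qed

section \<open>The quotient is free\<close>

definition Uu_supported :: "(nat \<Rightarrow> 's) set \<Rightarrow> ('s gen \<Rightarrow>\<^sub>0 int) set" where
  "Uu_supported U = {f \<in> carrier \<F>. \<forall>c. c \<notin> Uu_support U \<longrightarrow> frag_coords k a f c = 0}"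

lemma subgroup_Uu_supported: "subgroup (Uu_supported U) \<F>"
proof (rule group.subgroupI[OF group_free_grp])
  show "Uu_supported U \<subseteq> carrier \<F>"
    by (auto simp: Uu_supported_def simp del: carrier_free_grp)
  show "Uu_supported U \<noteq> {}"
    by (auto simp: Uu_supported_def frag_coords_def intro!: exI[of _ 0])
  show "inv\<^bsub>\<F>\<^esub> f \<in> Uu_supported U" if "f \<in> Uu_supported U" for f
    using that by (auto simp: Uu_supported_def frag_coords_def frag_eval_uminus)
  show "f \<otimes>\<^bsub>\<F>\<^esub> g \<in> Uu_supported U" if "f \<in> Uu_supported U" "g \<in> Uu_supported U" for f g
    using that keys_add[of f g] by (auto simp: Uu_supported_def frag_coords_def frag_eval_add)
qed

lemma rel_subgroup_Uu_supported: "\<R> \<subseteq> Uu_supported U"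
  unfolding rel_subgroup_def
  by (rule group.generate_subgroup_incl[OF group_free_grp _ subgroup_Uu_supported])
     (use relator_in_carrier in \<open>auto simp: Uu_supported_def simp del: carrier_free_grp\<close>)

lemma frag_of_gens_on_Uu_supported:
  assumes "e \<in> u" "g \<in> gens_on (U \<union> (u - {e}))"
  shows "frag_of g \<in> Uu_supported U"
proof -
  have "gen_coords k a g c = 0" if "c \<notin> Uu_support U" for c
  proof -
    consider "g = Zg"
      | \<eta>s m n where "g = Xg (restr \<eta>s m n)" "Uu_seq U \<eta>s" "m \<le> k"
      | \<eta>s n where "g = Yg \<eta>s n" "Uu_seq U \<eta>s"
      using assms unfolding gens_on_def Uu_seq_def by blast
    then show ?thesis
    proof cases
      case 3
      then show ?thesis
        using that y_coords_nonzero[of k a \<eta>s n c] by (auto simp: Uu_support_def)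
    qed (use that in \<open>auto simp: Uu_support_def\<close>)
  qed
  then show ?thesis
    using assms gens_on_subset by (auto simp: Uu_supported_def frag_coords_def)
qed

lemma G_Uu_coords:
  assumes "f \<in> carrier \<F>" "cls f \<in> G_Uu k \<Lambda> a U u" "c \<notin> Uu_support U"
  shows "frag_coords k a f c = 0"
proof -
  have sub: "subgroup (cls ` Uu_supported U) \<G>"
    by (rule group_hom.subgroup_img_is_subgroup[OF group_hom_cls subgroup_Uu_supported])
  have "G_U k \<Lambda> a (U \<union> (u - {e})) \<subseteq> cls ` Uu_supported U" if "e \<in> u" for e
    unfolding G_U_eq
    by (rule group.generate_subgroup_incl[OF group_Gx _ sub])
       (use frag_of_gens_on_Uu_supported[OF that] in blast)
  then have "G_Uu k \<Lambda> a U u \<subseteq> cls ` Uu_supported U"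
    unfolding G_Uu_def by (intro group.generate_subgroup_incl[OF group_Gx _ sub]) blast
  then obtain s where "s \<in> Uu_supported U" "cls f = cls s"
    using assms(2) by blast
  then have "f \<in> Uu_supported U"
    using normal.mem_of_rcos_eq[OF normal_rel_subgroup subgroup_Uu_supported
        rel_subgroup_Uu_supported assms(1)] by blast
  then show ?thesis
    using assms(3) by (simp add: Uu_supported_def)
qed

definition reducible :: "(nat \<Rightarrow> 's) set \<Rightarrow> ('s gen \<Rightarrow>\<^sub>0 int) set" where
  "reducible U = {f \<in> carrier \<F>.
     cls f \<in> generate \<G> (G_Uu k \<Lambda> a U u \<union> cls ` carrier (free_Abelian_group (basis U)))}"

lemma basis_subset_gens: "basis U \<subseteq> gens k \<Lambda>"
  by (auto simp: basis_def covering_def)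

lemma cls_basis_subset_carrier: "cls ` carrier (free_Abelian_group (basis U)) \<subseteq> carrier \<G>"
proof (rule image_subsetI)
  fix f assume "f \<in> carrier (free_Abelian_group (basis U))"
  then show "cls f \<in> carrier \<G>"
    using basis_subset_gens[of U] by (intro cls_in_carrier) auto
qed

lemma subgroup_reducible: "subgroup (reducible U) \<F>"
  unfolding reducible_def
  by (intro group_hom.subgroup_preimage[OF group_hom_cls] group.generate_is_subgroup[OF group_Gx])
     (use subgroup.subset[OF subgroup_G_Uu] cls_basis_subset_carrier in blast)

lemma reducible_diff: "\<lbrakk>f \<in> reducible U; g \<in> reducible U\<rbrakk> \<Longrightarrow> f - g \<in> reducible U"
  using subgroup.m_closed[OF subgroup_reducible] subgroup.m_inv_closed[OF subgroup_reducible]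
    subgroup.subset[OF subgroup_reducible]
  by (metis (no_types, lifting) carrier_free_grp diff_conv_add_uminus free_grp_simps(1,3) subsetD)

lemma reducible_cmul:
  assumes "f \<in> reducible U"
  shows "frag_cmul c f \<in> reducible U"
proof -
  have "f \<in> carrier \<F>"
    using assms subgroup.subset[OF subgroup_reducible] by blast
  then have "frag_cmul c f = f [^]\<^bsub>\<F>\<^esub> c"
    unfolding free_grp_def by (intro int_pow_free_Abelian_group[symmetric]) simp
  also have "\<dots> \<in> reducible U"
    by (rule group.subgroup_int_pow_closed[OF group_free_grp subgroup_reducible assms])
  finally show ?thesis .
qed

lemma reducible_sum:
  "(\<And>i. i \<in> I \<Longrightarrow> f i \<in> reducible U) \<Longrightarrow> (\<Sum>i\<in>I. f i) \<in> reducible U"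
  using subgroup.one_closed[OF subgroup_reducible] subgroup.m_closed[OF subgroup_reducible]
  by (induction I rule: infinite_finite_induct) auto

lemma G_Uu_reducible: "\<lbrakk>f \<in> carrier \<F>; cls f \<in> G_Uu k \<Lambda> a U u\<rbrakk> \<Longrightarrow> f \<in> reducible U"
  by (auto simp: reducible_def intro: generate.incl simp del: carrier_free_grp)

lemma basis_reducible: "Poly_Mapping.keys f \<subseteq> basis U \<Longrightarrow> f \<in> reducible U"
  using basis_subset_gens by (auto simp: reducible_def intro: generate.incl)

lemma relator_reducible: "\<eta>s \<in> \<Lambda> \<Longrightarrow> relator k a \<eta>s n \<in> reducible U"
  using relator_in_carrier subgroup.one_closed[OF subgroup_G_Uu]
  by (intro G_Uu_reducible) auto

lemma gens_on_Uu_reducible: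
  assumes "e \<in> u" "g \<in> gens_on (U \<union> (u - {e}))"
  shows "frag_of g \<in> reducible U"
proof (rule G_Uu_reducible)
  show "frag_of g \<in> carrier \<F>"
    using assms(2) gens_on_subset by auto
  have "cls (frag_of g) \<in> G_U k \<Lambda> a (U \<union> (u - {e}))"
    unfolding G_U_eq using assms(2) by (auto intro: generate.incl)
  then show "cls (frag_of g) \<in> G_Uu k \<Lambda> a U u"
    using G_U_subset_G_Uu[OF assms(1)] by blast
qed

lemma Zg_reducible: "u \<noteq> {} \<Longrightarrow> frag_of Zg \<in> reducible U"
  using gens_on_Uu_reducible by (auto simp: gens_on_def)

lemma noncovering_reducible:
  assumes "\<eta>s \<in> \<Lambda>" "set \<eta>s \<subseteq> u" "set \<eta>s \<noteq> u"
  shows "frag_of (Yg \<eta>s n) \<in> reducible U" "m \<le> k \<Longrightarrow> frag_of (Xg (restr \<eta>s m n)) \<in> reducible U"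
proof -
  obtain e where e: "e \<in> u" "set \<eta>s \<subseteq> U \<union> (u - {e})"
    using assms(2,3) by blast
  show "frag_of (Yg \<eta>s n) \<in> reducible U"
    using gens_on_Uu_reducible[OF e(1)] e(2) assms(1) by (auto simp: gens_on_def)
  show "m \<le> k \<Longrightarrow> frag_of (Xg (restr \<eta>s m n)) \<in> reducible U"
    using gens_on_Uu_reducible[OF e(1)] e(2) assms(1) unfolding gens_on_def by blast
qed

lemma Xg_nonslot_reducible:
  assumes "\<eta>s \<in> \<Lambda>" "set \<eta>s \<subseteq> u" "m \<le> k" "\<not> private_slot (restr \<eta>s m n)"
  shows "frag_of (Xg (restr \<eta>s m n)) \<in> reducible U"
proof (cases "Xg (restr \<eta>s m n) \<in> Uu_support U")
  case True
  then obtain \<eta>s' m' j where "Uu_seq U \<eta>s'" "m' \<le> k" "restr \<eta>s m n = restr \<eta>s' m' j"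
    by (auto simp: Uu_support_def)
  then obtain e where "e \<in> u" "Xg (restr \<eta>s m n) \<in> gens_on (U \<union> (u - {e}))"
    unfolding Uu_seq_def gens_on_def by auto
  then show ?thesis
    by (rule gens_on_Uu_reducible)
next
  case False
  show ?thesis
  proof (cases "set \<eta>s = u")
    case True
    then have "Xg (restr \<eta>s m n) \<in> basis U"
      using assms \<open>Xg (restr \<eta>s m n) \<notin> Uu_support U\<close> unfolding basis_def covering_def by blast
    then show ?thesis
      by (intro basis_reducible) simp
  qed (use noncovering_reducible(2)[OF assms(1,2) _ assms(3)] in blast)
qed

lemma Xg_reducible:
  assumes "\<eta>s \<in> \<Lambda>" "set \<eta>s \<subseteq> u" "m \<le> k" "u \<noteq> {}"
  shows "frag_of (Xg (restr \<eta>s m n)) \<in> reducible U"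
proof (cases "private_slot (restr \<eta>s m n)")
  case True
  then obtain \<eta>s' j where \<eta>s': "covering \<eta>s'" "sep_depth u \<le> j"
      and slot: "restr \<eta>s m n = restr \<eta>s' (rep_index \<eta>s') j"
    by (auto simp: private_slot_def)
  have \<eta>s'_on_u: "\<eta>s' \<in> \<Lambda>" "set \<eta>s' \<subseteq> u"
    using \<eta>s'(1) by (auto simp: covering_def)
  have other_slots: "frag_of (Xg (restr \<eta>s' m' j)) \<in> reducible U"
    if "m' \<in> {..k} - {rep_index \<eta>s'}" for m'
  proof (rule Xg_nonslot_reducible[OF \<eta>s'_on_u])
    show "\<not> private_slot (restr \<eta>s' m' j)"
    proof
      assume "private_slot (restr \<eta>s' m' j)"
      then obtain \<eta>s'' j' where "covering \<eta>s''" "sep_depth u \<le> j'"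
          "restr \<eta>s'' (rep_index \<eta>s'') j' = restr \<eta>s' m' j"
        by (auto simp: private_slot_def)
      then have "\<eta>s' = \<eta>s'' \<and> m' = rep_index \<eta>s''"
        using deep_restr_inj[OF _ \<eta>s'_on_u(1) _ \<eta>s'_on_u(2) rep_index_repeats(1)] by (auto simp: covering_def)
      then show False
        using that by simp
    qed
  qed (use that in simp)
  have Yg_basis: "frag_of (Yg \<eta>s' j') \<in> reducible U" if "j \<le> j'" for j'
    using \<eta>s' that by (intro basis_reducible) (auto simp: basis_def)
  have "frag_of (Xg (restr \<eta>s' (rep_index \<eta>s') j)) \<in> reducible U"
    unfolding relator_solve_Xg[OF rep_index_repeats(1)[OF \<eta>s'(1)], where \<eta>s = \<eta>s' and n = j and a = a]
    by (intro reducible_diff reducible_cmul reducible_sum Yg_basis Zg_reducible assms(4)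
          other_slots relator_reducible \<eta>s'_on_u(1)) auto
  then show ?thesis
    using slot by simp
qed (use Xg_nonslot_reducible assms in blast)

lemma Yg_reducible:
  assumes "\<eta>s \<in> \<Lambda>" "set \<eta>s \<subseteq> u" "u \<noteq> {}"
  shows "frag_of (Yg \<eta>s n) \<in> reducible U"
proof (cases "set \<eta>s = u")
  case True
  then have cov: "covering \<eta>s"
    using assms by (simp add: covering_def)
  show ?thesis
  proof (cases "sep_depth u \<le> n")
    case True
    then show ?thesis
      using cov by (intro basis_reducible) (auto simp: basis_def)
  next
    case False
    then have "n \<le> sep_depth u"
      by simp
    then show ?thesis
    proof (induction n rule: inc_induct)
      case base
      then show ?case
        using cov by (intro basis_reducible) (auto simp: basis_def)
    next
      case (step n)
      show ?case
        unfolding relator_solve_Yg[where \<eta>s = \<eta>s and n = n and a = a and k = k]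
        by (intro reducible_diff reducible_cmul reducible_sum step.IH Zg_reducible Xg_reducible
              relator_reducible assms) auto
    qed
  qed
qed (use noncovering_reducible(1) assms in blast)

lemma G_U_subset_generate_basis:
  assumes "u \<noteq> {}"
  shows "G_U k \<Lambda> a u
           \<subseteq> generate \<G> (G_Uu k \<Lambda> a U u \<union> cls ` carrier (free_Abelian_group (basis U)))"
  unfolding G_U_eq
proof (rule group.generate_subgroup_incl[OF group_Gx])
  show "subgroup (generate \<G> (G_Uu k \<Lambda> a U u \<union> cls ` carrier (free_Abelian_group (basis U)))) \<G>"
    using subgroup.subset[OF subgroup_G_Uu] cls_basis_subset_carrier
    by (intro group.generate_is_subgroup[OF group_Gx]) blast
  have "frag_of g \<in> reducible U" if "g \<in> gens_on u" for g
    using that Zg_reducible Yg_reducible Xg_reducible assms by (auto simp: gens_on_def)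
  then show "(\<lambda>g. cls (frag_of g)) ` gens_on u
               \<subseteq> generate \<G> (G_Uu k \<Lambda> a U u \<union> cls ` carrier (free_Abelian_group (basis U)))"
    by (auto simp: reducible_def)
qed

lemma cls_basis_subset_G_U: "cls ` carrier (free_Abelian_group (basis U)) \<subseteq> G_U k \<Lambda> a u"
proof (rule image_subsetI)
  fix f assume "f \<in> carrier (free_Abelian_group (basis U))"
  then have "Poly_Mapping.keys f \<subseteq> basis U"
    by simp
  then show "cls f \<in> G_U k \<Lambda> a u"
  proof (rule free_Abelian_group_induct)
    show "cls 0 \<in> G_U k \<Lambda> a u"
      using subgroup.one_closed[OF subgroup_G_U] group_hom.hom_one[OF group_hom_cls] by simp
  next
    fix f g
    assume "Poly_Mapping.keys f \<subseteq> basis U" "Poly_Mapping.keys g \<subseteq> basis U"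
      and fg: "cls f \<in> G_U k \<Lambda> a u" "cls g \<in> G_U k \<Lambda> a u"
    then have "f \<in> carrier \<F>" "g \<in> carrier \<F>"
      using basis_subset_gens[of U] by auto
    then have "cls (f - g) = cls f \<otimes>\<^bsub>\<G>\<^esub> inv\<^bsub>\<G>\<^esub> cls g"
      by (rule cls_diff)
    then show "cls (f - g) \<in> G_U k \<Lambda> a u"
      using fg subgroup.m_closed[OF subgroup_G_U] subgroup.m_inv_closed[OF subgroup_G_U] by simp
  next
    fix c assume "c \<in> basis U"
    then have "c \<in> gens_on u"
      unfolding basis_def gens_on_def covering_def by blast
    then show "cls (frag_of c) \<in> G_U k \<Lambda> a u"
      unfolding G_U_eq by (auto intro: generate.incl)
  qed
qed

lemma cls_hom_free_basis: "cls \<in> hom (free_Abelian_group (basis U)) \<G>"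
proof (rule homI)
  show "cls f \<in> carrier \<G>" if "f \<in> carrier (free_Abelian_group (basis U))" for f
    using cls_basis_subset_carrier that by blast
  show "cls (f \<otimes>\<^bsub>free_Abelian_group (basis U)\<^esub> g) = cls f \<otimes>\<^bsub>\<G>\<^esub> cls g"
    if "f \<in> carrier (free_Abelian_group (basis U))" "g \<in> carrier (free_Abelian_group (basis U))"
    for f g
  proof -
    have "f \<in> carrier \<F>" "g \<in> carrier \<F>"
      using that basis_subset_gens[of U] by auto
    then show ?thesis
      by (simp add: cls_add)
  qed
qed

lemma subgroup_generated_G_Uu_basis:
  assumes "u \<noteq> {}"
  shows "subgroup_generated \<G> (G_Uu k \<Lambda> a U u \<union> cls ` carrier (free_Abelian_group (basis U)))
           = subgroup_generated \<G> (G_Uu k \<Lambda> a U u \<union> G_U k \<Lambda> a u)"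
proof -
  let ?H = "G_Uu k \<Lambda> a U u"
  let ?K = "cls ` carrier (free_Abelian_group (basis U))"
  have H: "?H \<subseteq> carrier \<G>" and G_U: "G_U k \<Lambda> a u \<subseteq> carrier \<G>"
    using subgroup.subset[OF subgroup_G_Uu] subgroup.subset[OF subgroup_G_U] by auto
  have "generate \<G> (?H \<union> ?K) = generate \<G> (?H \<union> G_U k \<Lambda> a u)"
  proof
    show "generate \<G> (?H \<union> ?K) \<subseteq> generate \<G> (?H \<union> G_U k \<Lambda> a u)"
      using cls_basis_subset_G_U H G_U
      by (intro group.mono_generate[OF group_Gx]) blast
    show "generate \<G> (?H \<union> G_U k \<Lambda> a u) \<subseteq> generate \<G> (?H \<union> ?K)"
      using G_U_subset_generate_basis[OF assms] H cls_basis_subset_carrier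
      by (intro group.generate_subgroup_incl[OF group_Gx] group.generate_is_subgroup[OF group_Gx]
          Un_least) (auto intro: generate.incl)
  qed
  then show ?thesis
    using H G_U cls_basis_subset_carrier
    by (simp add: subgroup_generated_def Int_absorb1)
qed

lemma quotient_iso_free_Abelian_group:
  assumes disj: "U \<inter> u = {}" and "u \<noteq> {}"
  shows "free_Abelian_group (basis U)
           \<cong> subgroup_generated \<G> (G_Uu k \<Lambda> a U u \<union> G_U k \<Lambda> a u) Mod G_Uu k \<Lambda> a U u"
proof -
  have "f = 0" if f: "f \<in> carrier (free_Abelian_group (basis U))"
    and H: "cls f \<in> G_Uu k \<Lambda> a U u" for f
  proof (rule basis_independent[OF disj])
    show "Poly_Mapping.keys f \<subseteq> basis U"
      using f by simp
    then show "frag_coords k a f c = 0" if "c \<notin> Uu_support U" for c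
      using G_Uu_coords[OF _ H that] basis_subset_gens by auto
  qed
  then have "free_Abelian_group (basis U) \<cong> subgroup_generated \<G>
      (G_Uu k \<Lambda> a U u \<union> cls ` carrier (free_Abelian_group (basis U))) Mod G_Uu k \<Lambda> a U u"
    by (intro comm_group.iso_quotient_by_complement[OF comm_group_Gx group_free_Abelian_group
          cls_hom_free_basis subgroup_G_Uu]) auto
  then show ?thesis
    by (simp only: subgroup_generated_G_Uu_basis[OF \<open>u \<noteq> {}\<close>])
qed

lemma countable_basis: "countable (basis U)"
proof (rule countable_subset)
  have "finite {\<eta>s. covering \<eta>s}"
    by (rule finite_subset[OF _ finite_lists_length_eq[OF finite_u, of "Suc k"]])
       (auto simp: covering_def length_Lambda)
  then have "countable {\<eta>s. covering \<eta>s}"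
    by (rule countable_finite)
  then show "countable ((\<lambda>(\<eta>s, m, j). Xg (restr \<eta>s m j)) ` ({\<eta>s. covering \<eta>s} \<times> UNIV)
                \<union> (\<lambda>(\<eta>s, n). Yg \<eta>s n) ` ({\<eta>s. covering \<eta>s} \<times> UNIV))"
    by (intro countable_Un countable_image countable_SIGMA) auto
  show "basis U \<subseteq> (\<lambda>(\<eta>s, m, j). Xg (restr \<eta>s m j)) ` ({\<eta>s. covering \<eta>s} \<times> UNIV)
                \<union> (\<lambda>(\<eta>s, n). Yg \<eta>s n) ` ({\<eta>s. covering \<eta>s} \<times> UNIV)"
  proof
    fix g assume "g \<in> basis U"
    then consider \<eta>s m j where "g = Xg (restr \<eta>s m j)" "covering \<eta>s"
      | \<eta>s n where "g = Yg \<eta>s n" "covering \<eta>s"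
      unfolding basis_def by blast
    then show "g \<in> (\<lambda>(\<eta>s, m, j). Xg (restr \<eta>s m j)) ` ({\<eta>s. covering \<eta>s} \<times> UNIV)
                \<union> (\<lambda>(\<eta>s, n). Yg \<eta>s n) ` ({\<eta>s. covering \<eta>s} \<times> UNIV)"
    proof cases
      case (1 \<eta>s m j)
      then show ?thesis
        by (intro UnI1 image_eqI[of _ _ "(\<eta>s, m, j)"]) auto
    next
      case (2 \<eta>s n)
      then show ?thesis
        by (intro UnI2 image_eqI[of _ _ "(\<eta>s, n)"]) auto
    qed
  qed
qed

lemma infinite_basis:
  assumes "covering \<eta>s"
  shows "infinite (basis U)"
proof
  assume "finite (basis U)"
  moreover have "Yg \<eta>s ` {sep_depth u..} \<subseteq> basis U"
    using assms by (auto simp: basis_def)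
  ultimately have "finite (Yg \<eta>s ` {sep_depth u..})"
    by (rule finite_subset[rotated])
  then show False
    using infinite_Ici[of "sep_depth u"] by (simp add: finite_image_iff inj_on_def)
qed

lemma basis_eqpoll: "basis U \<approx> basis V"
proof (cases "\<exists>\<eta>s. covering \<eta>s")
  case True
  then show ?thesis
    using countable_basis infinite_basis by (blast intro: countable_infinite_eqpoll)
next
  case False
  then have "basis U = {}" "basis V = {}"
    by (auto simp: basis_def)
  then show ?thesis
    by (simp add: eqpoll_refl)
qed

end

theorem claim1p10:
  fixes k :: nat and S :: "'s set" and \<Lambda> :: "(nat \<Rightarrow> 's) list set"
    and a :: "(nat \<Rightarrow> 's) list \<Rightarrow> nat \<Rightarrow> int"
    and U u :: "(nat \<Rightarrow> 's) set"
  assumes "is_param k S \<Lambda>"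
    and "U \<subseteq> omega_seqs S"
    and "u \<subseteq> omega_seqs S - U" and "finite u" and "card u \<le> k"
  shows "(subgroup_generated (Gx k \<Lambda> a) (G_Uu k \<Lambda> a U u \<union> G_U k \<Lambda> a u))
            Mod (G_Uu k \<Lambda> a U u)
         \<cong> (subgroup_generated (Gx k \<Lambda> a) (G_U k \<Lambda> a u)) Mod (G_Uu k \<Lambda> a {} u)"
proof -
  interpret small_support k \<Lambda> a u
    using assms by unfold_locales (auto simp: is_param_def)
  show ?thesis
  proof (cases "u = {}")
    case True
    then show ?thesis
      using subgroup.one_closed[OF subgroup_G_U] by (simp add: G_Uu_empty insert_absorb)
  next
    case False
    have "subgroup_generated \<G> (G_Uu k \<Lambda> a U u \<union> G_U k \<Lambda> a u) Mod G_Uu k \<Lambda> a U u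
          \<cong> free_Abelian_group (basis U)"
      using quotient_iso_free_Abelian_group[OF _ False] assms(3)
      by (intro group.iso_sym[OF group_free_Abelian_group]) blast
    also have "\<dots> \<cong> free_Abelian_group (basis {})"
      using isomorphic_free_Abelian_groups basis_eqpoll by blast
    also have "\<dots> \<cong> subgroup_generated \<G> (G_U k \<Lambda> a u) Mod G_Uu k \<Lambda> a {} u"
      using quotient_iso_free_Abelian_group[of "{}", OF _ False] Un_absorb1[OF G_Uu_empty_subset_G_U]
      by simp
    finally show ?thesis .
  qed
qed

end
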